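(* Let $n,k_1,k_2$ be nonnegative integers with $k_1+k_2\le n$ and $\ell=n-k_1-k_2$. If $G\in\mathcal{S}$, then there is a matrix $G'\in\mathcal{T}$ such that the $\mathbb{Z}_4$-codes with generator matrices $G$ and $G'$ are equivalent.
   Context: $\mathbb{Z}_4=\{0,1,2,3\}$ is the ring of integers modulo $4$; a $\mathbb{Z}_4$-code of length $n$ is a submodule of $\mathbb{Z}_4^n$, and two codes are equivalent if one is obtained from the other by permuting coordinates and changing the signs of some coordinates. Order $\mathbb{Z}_4$ by $0<1<2<3$ and order vectors of $\mathbb{Z}_4^m$ lexicographically (compare first differing coordinate). Let $M_{m\times n}(R)$ denote the set of $m\times n$ matrices with entries in $R$. For $T\subset M_{m\times n}(\mathbb{Z}_4)$ let $P_{row}(T)$ be the set of matrices in $T$ whose rows $a_1,\dots,a_m$ satisfy $a_i\le a_j$ whenever $i\le j$. For $(0,1)$-matrices $A$ ($k_1\times k_2$), $D$ ($k_2\times\ell$) and a $\mathbb{Z}_4$-matrix $B$ ($k_1\times\ell$), let $G(A,B,D)=\begin{pmatrix} I_{k_1} & A & B\\ O & 2I_{k_2} & 2D\end{pmatrix}$ (a $\mathbb{Z}_4$-matrix, $I_k$ identity, $O$ zero matrix). Let $\mathcal{S}=\{G(A,B,D)\mid A\in M_{k_1\times k_2}(\{0,1\}),\ B\in M_{k_1\times\ell}(\mathbb{Z}_4),\ D\in M_{k_2\times\ell}(\{0,1\})\}$ and $\mathcal{T}=\{G(A,B,D)\in\mathcal{S}\mid A\in P_{row}(M_{k_1\times k_2}(\{0,1\}))\}$.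 *)

theory Defs
  imports Main
begin

text \<open>Elements of Z4 are represented by the integers 0,1,2,3 (ordered 0<1<2<3).
  An m x n matrix is a function nat => nat => int, of which only the entries
  with row index < m and column index < n matter.  A vector of Z4^n is a
  function nat => int with values in {0..3} at indices < n and 0 elsewhere.\<close>

definition z4_mat :: "nat \<Rightarrow> nat \<Rightarrow> (nat \<Rightarrow> nat \<Rightarrow> int) \<Rightarrow> bool" where
  "z4_mat m n M \<longleftrightarrow> (\<forall>i<m. \<forall>j<n. M i j \<in> {0,1,2,3})"

definition bin_mat :: "nat \<Rightarrow> nat \<Rightarrow> (nat \<Rightarrow> nat \<Rightarrow> int) \<Rightarrow> bool" where
  "bin_mat m n M \<longleftrightarrow> (\<forall>i<m. \<forall>j<n. M i j \<in> {0,1})"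

definition lex_le :: "nat \<Rightarrow> (nat \<Rightarrow> int) \<Rightarrow> (nat \<Rightarrow> int) \<Rightarrow> bool" where
  "lex_le n u v \<longleftrightarrow> (\<forall>t<n. u t = v t) \<or>
     (\<exists>t<n. (\<forall>s<t. u s = v s) \<and> u t < v t)"

definition row_sorted :: "nat \<Rightarrow> nat \<Rightarrow> (nat \<Rightarrow> nat \<Rightarrow> int) \<Rightarrow> bool" where
  "row_sorted m n M \<longleftrightarrow> (\<forall>i j. i \<le> j \<longrightarrow> j < m \<longrightarrow> lex_le n (M i) (M j))"

text \<open>The generator matrix G(A,B,D) = [[I_k1, A, B],[O, 2 I_k2, 2 D]] of size
  (k1+k2) x (k1+k2+l).\<close>
definition Gmat :: "nat \<Rightarrow> nat \<Rightarrow> nat \<Rightarrow> (nat \<Rightarrow> nat \<Rightarrow> int) \<Rightarrow> (nat \<Rightarrow> nat \<Rightarrow> int)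
     \<Rightarrow> (nat \<Rightarrow> nat \<Rightarrow> int) \<Rightarrow> (nat \<Rightarrow> nat \<Rightarrow> int)" where
  "Gmat k1 k2 l A B D = (\<lambda>i j.
     if i < k1 then
       (if j < k1 then (if i = j then 1 else 0)
        else if j < k1 + k2 then A i (j - k1)
        else B i (j - k1 - k2))
     else
       (if j < k1 then 0
        else if j < k1 + k2 then (if j - k1 = i - k1 then 2 else 0)
        else 2 * D (i - k1) (j - k1 - k2)))"

definition z4_code :: "nat \<Rightarrow> nat \<Rightarrow> (nat \<Rightarrow> nat \<Rightarrow> int) \<Rightarrow> (nat \<Rightarrow> int) set" where
  "z4_code m n G = {(\<lambda>j. if j < n then (\<Sum>i<m. c i * G i j) mod 4 else 0) | c. True}"

definition z4_equiv :: "nat \<Rightarrow> (nat \<Rightarrow> int) set \<Rightarrow> (nat \<Rightarrow> int) set \<Rightarrow> bool" where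
  "z4_equiv n C C' \<longleftrightarrow> (\<exists>\<sigma> s. bij_betw \<sigma> {..<n} {..<n} \<and> (\<forall>j<n. s j \<in> {1, -1}) \<and>
      C' = (\<lambda>v. (\<lambda>j. if j < n then (s j * v (\<sigma> j)) mod 4 else 0)) ` C)"

end

theory Submission
  imports Defs "HOL-Library.List_Lexorder" "HOL-Combinatorics.Permutations"
begin

text \<open>Let p be the permutation of the first k1 rows that sorts the rows of A. Applying p
  simultaneously to the rows of G(A,B,D) and to its first k1 columns keeps the block I_k1 in
  place and yields G(A',B',D), where A', B' are A, B with rows permuted by p. Permuting the
  rows of a generator matrix does not change the code, and permuting its columns is a code
  equivalence with all signs +1.\<close>

lemma lex_le_if_map_le:
  fixes u v :: "nat \<Rightarrow> int"
  assumes "map u [0..<k] \<le> map v [0..<k]"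
  shows "lex_le k u v"
proof (cases "map u [0..<k] = map v [0..<k]")
  case True
  then show ?thesis unfolding lex_le_def by (simp add: map_eq_conv)
next
  case False
  then have "(map u [0..<k], map v [0..<k]) \<in> lexord {(a, b). a < b}"
    using assms unfolding list_le_def list_less_def by auto
  then obtain t where t: "t < k" "take t (map u [0..<k]) = take t (map v [0..<k])" "u t < v t"
    unfolding lexord_take_index_conv by auto
  have "u s = v s" if "s < t" for s
    using nth_take[OF that, of "map u [0..<k]"] nth_take[OF that, of "map v [0..<k]"] t that
    by simp
  with t show ?thesis unfolding lex_le_def by blast
qed

lemma sorting_permutation:
  fixes key :: "nat \<Rightarrow> 'a::linorder"
  obtains p where "p permutes {..<k}" "\<And>i j. i \<le> j \<Longrightarrow> j < k \<Longrightarrow> key (p i) \<le> key (p j)"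
proof -
  define xs where "xs = sort_key key [0..<k]"
  obtain p where p: "p permutes {..<k}" and xs: "permute_list p [0..<k] = xs"
    using mset_eq_permutation[of xs "[0..<k]"] unfolding xs_def by auto
  have "p i = xs ! i" if "i < k" for i
    using that p xs[symmetric] permutes_in_image[OF p, of i]
    by (simp add: permute_list_nth)
  moreover have "sorted (map key xs)" "length xs = k"
    unfolding xs_def by simp_all
  ultimately have "key (p i) \<le> key (p j)" if "i \<le> j" "j < k" for i j
    using that by (simp add: sorted_iff_nth_mono)
  with p show thesis using that by blast
qed

lemma z4_code_permute_rows_cols:
  assumes p: "p permutes {..<m}" and \<sigma>: "\<sigma> permutes {..<n}"
  shows "z4_code m n (\<lambda>i j. G (p i) (\<sigma> j)) =
    (\<lambda>v j. if j < n then (1 * v (\<sigma> j)) mod 4 else 0) ` z4_code m n G"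
proof -
  define word where
    "word H c = (\<lambda>j. if j < n then (\<Sum>i<m. c i * H i j) mod 4 else 0)"
    for H :: "nat \<Rightarrow> nat \<Rightarrow> int" and c :: "nat \<Rightarrow> int"
  have code: "z4_code m n H = range (word H)" for H
    unfolding z4_code_def word_def by auto
  have "(\<Sum>i<m. (c \<circ> p) i * G (p i) (\<sigma> j)) = (\<Sum>i<m. c i * G i (\<sigma> j))" for c j
    using sum.reindex_bij_betw[OF permutes_imp_bij[OF p], of "\<lambda>i. c i * G i (\<sigma> j)"] by simp
  then have transport: "word (\<lambda>i j. G (p i) (\<sigma> j)) (c \<circ> p) =
      (\<lambda>j. if j < n then (1 * word G c (\<sigma> j)) mod 4 else 0)" for c
    using permutes_in_image[OF \<sigma>] by (auto simp: word_def)
  have "(c \<circ> inv p) \<circ> p = c" for c :: "nat \<Rightarrow> int"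
    by (simp add: comp_assoc permutes_inv_o(2)[OF p])
  then have "surj (\<lambda>c::nat \<Rightarrow> int. c \<circ> p)"
    by (rule surjI[where f = "\<lambda>c. c \<circ> inv p"])
  then have "range (word (\<lambda>i j. G (p i) (\<sigma> j))) =
      range (\<lambda>c. word (\<lambda>i j. G (p i) (\<sigma> j)) (c \<circ> p))"
    by (metis image_image)
  then show ?thesis
    unfolding code transport by (simp add: image_image)
qed

lemma z4_equiv_permute_rows_cols:
  assumes "p permutes {..<m}" and "\<sigma> permutes {..<n}"
  shows "z4_equiv n (z4_code m n G) (z4_code m n (\<lambda>i j. G (p i) (\<sigma> j)))"
  unfolding z4_equiv_def z4_code_permute_rows_cols[OF assms]
  using permutes_imp_bij[OF assms(2)] by (intro exI[of _ \<sigma>] exI[of _ "\<lambda>_. 1"]) auto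

lemma Gmat_permute_first_rows:
  assumes p: "p permutes {..<k1}"
  shows "Gmat k1 k2 l (\<lambda>i. A (p i)) (\<lambda>i. B (p i)) D i j = Gmat k1 k2 l A B D (p i) (p j)"
proof -
  have "p x < k1 \<longleftrightarrow> x < k1" "\<not> x < k1 \<Longrightarrow> p x = x" for x
    using permutes_in_image[OF p, of x] permutes_not_in[OF p, of x] by auto
  moreover have "p i = p j \<longleftrightarrow> i = j"
    using permutes_inj[OF p] by (auto dest: injD)
  ultimately show ?thesis
    unfolding Gmat_def by (cases "i < k1"; cases "j < k1") simp_all
qed

theorem mainTheorem9:
  fixes n k1 k2 :: nat and A B D :: "nat \<Rightarrow> nat \<Rightarrow> int"
  assumes "k1 + k2 \<le> n"
    and "bin_mat k1 k2 A" and "z4_mat k1 (n - k1 - k2) B" and "bin_mat k2 (n - k1 - k2) D"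
  shows "\<exists>A' B' D'. bin_mat k1 k2 A' \<and> row_sorted k1 k2 A' \<and>
           z4_mat k1 (n - k1 - k2) B' \<and> bin_mat k2 (n - k1 - k2) D' \<and>
           z4_equiv n (z4_code (k1 + k2) n (Gmat k1 k2 (n - k1 - k2) A B D))
                      (z4_code (k1 + k2) n (Gmat k1 k2 (n - k1 - k2) A' B' D'))"
proof -
  obtain p where p: "p permutes {..<k1}"
    and sorted: "\<And>i j. i \<le> j \<Longrightarrow> j < k1 \<Longrightarrow> map (A (p i)) [0..<k2] \<le> map (A (p j)) [0..<k2]"
    using sorting_permutation[of k1 "\<lambda>i. map (A i) [0..<k2]"] by blast
  define A' where "A' i = A (p i)" for i
  define B' where "B' i = B (p i)" for i
  have rows: "p i < k1" if "i < k1" for i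
    using permutes_in_image[OF p] that by simp
  have "row_sorted k1 k2 A'"
    unfolding row_sorted_def A'_def using sorted lex_le_if_map_le by blast
  moreover have "bin_mat k1 k2 A'" "z4_mat k1 (n - k1 - k2) B'"
    using assms(2,3) rows unfolding bin_mat_def z4_mat_def A'_def B'_def by auto
  moreover have "z4_equiv n (z4_code (k1 + k2) n (Gmat k1 k2 (n - k1 - k2) A B D))
                      (z4_code (k1 + k2) n (Gmat k1 k2 (n - k1 - k2) A' B' D))"
    using z4_equiv_permute_rows_cols[OF permutes_subset[OF p] permutes_subset[OF p]] assms(1)
    unfolding A'_def B'_def Gmat_permute_first_rows[OF p] by auto
  ultimately show ?thesis
    using assms(4) by blast
qed

end
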